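(* Let $A$ be a linear matrix. Then $A$ is balanced if and only if $A$ does not contain any submatrix congruent to $C_3$ and $G_A$ is a diamond-free graph that contains neither an odd hole nor an HOH-free multisun as an induced subgraph.
   Context: A $\{0,1\}$-matrix is linear if it has no $2\times2$ submatrix with all entries $1$; it is balanced if it has no square submatrix of odd order with exactly two 1's in every row and column. Matrices are congruent if one is obtained from the other by permuting rows and columns; $C_3$ is the $3\times3$ matrix with $c_{i,j}=1$ iff $j\in\{i,i+1\}$ mod $3$. The intersection graph $G_A$ has the columns of $A$ as vertices, two being adjacent iff they are non-orthogonal. A graph is diamond-free if it has no induced $K_4$ minus an edge; an odd hole is an induced cycle of odd length at least $5$. A multisun is a diamond-free graph $G$ of odd order whose maximal cliques of size $2$ form the edge set of a Hamiltonian cycle $C$ (the rim); the other maximal cliques consist of pairwise nonconsecutive vertices of $C$ (inscribed cliques). A sub-multisun is obtained by deleting the edge sets of some, but not all, inscribed cliques. A multisun is HOH-free if neither it nor any of its sub-multisuns contains an odd hole as an induced subgraph. *)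

theory Defs
  imports Main
begin

text \<open>A {0,1}-matrix is given by a finite set R of row indices, a finite set C
of column indices and an entry function A (True = 1, False = 0).\<close>

definition linear_matrix :: "'r set \<Rightarrow> 'c set \<Rightarrow> ('r \<Rightarrow> 'c \<Rightarrow> bool) \<Rightarrow> bool" where
  "linear_matrix R C A \<longleftrightarrow>
     \<not> (\<exists>r1\<in>R. \<exists>r2\<in>R. \<exists>c1\<in>C. \<exists>c2\<in>C. r1 \<noteq> r2 \<and> c1 \<noteq> c2 \<and>
            A r1 c1 \<and> A r1 c2 \<and> A r2 c1 \<and> A r2 c2)"

definition balanced :: "'r set \<Rightarrow> 'c set \<Rightarrow> ('r \<Rightarrow> 'c \<Rightarrow> bool) \<Rightarrow> bool" where
  "balanced R C A \<longleftrightarrow>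
     \<not> (\<exists>R' C'. R' \<subseteq> R \<and> C' \<subseteq> C \<and> card R' = card C' \<and> odd (card R') \<and>
            (\<forall>r\<in>R'. card {c\<in>C'. A r c} = 2) \<and>
            (\<forall>c\<in>C'. card {r\<in>R'. A r c} = 2))"

definition C3 :: "nat \<Rightarrow> nat \<Rightarrow> bool" where
  "C3 i j \<longleftrightarrow> j = i \<or> j = (i + 1) mod 3"

definition contains_C3 :: "'r set \<Rightarrow> 'c set \<Rightarrow> ('r \<Rightarrow> 'c \<Rightarrow> bool) \<Rightarrow> bool" where
  "contains_C3 R C A \<longleftrightarrow>
     (\<exists>f g. inj_on f {0..<3} \<and> inj_on g {0..<3} \<and>
            f ` {0..<3} \<subseteq> R \<and> g ` {0..<3} \<subseteq> C \<and>
            (\<forall>i<3. \<forall>j<3. A (f i) (g j) \<longleftrightarrow> C3 i j))"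

definition GA :: "'r set \<Rightarrow> ('r \<Rightarrow> 'c \<Rightarrow> bool) \<Rightarrow> 'c \<Rightarrow> 'c \<Rightarrow> bool" where
  "GA R A c c' \<longleftrightarrow> c \<noteq> c' \<and> (\<exists>r\<in>R. A r c \<and> A r c')"

text \<open>A graph is a vertex set V with a (symmetric, irreflexive) adjacency
relation E; all notions are relativised to V, so the induced subgraph on
S \<subseteq> V is simply (S, E).\<close>

definition diamond_free :: "'v set \<Rightarrow> ('v \<Rightarrow> 'v \<Rightarrow> bool) \<Rightarrow> bool" where
  "diamond_free V E \<longleftrightarrow>
     \<not> (\<exists>a\<in>V. \<exists>b\<in>V. \<exists>c\<in>V. \<exists>d\<in>V. distinct [a, b, c, d] \<and>
            E a b \<and> E a c \<and> E a d \<and> E b c \<and> E b d \<and> \<not> E c d)"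

definition induced_cycle :: "('v \<Rightarrow> 'v \<Rightarrow> bool) \<Rightarrow> 'v list \<Rightarrow> bool" where
  "induced_cycle E vs \<longleftrightarrow> length vs \<ge> 3 \<and> distinct vs \<and>
     (\<forall>i<length vs. \<forall>j<length vs.
        E (vs ! i) (vs ! j) \<longleftrightarrow> (j = (i + 1) mod length vs \<or> i = (j + 1) mod length vs))"

definition has_odd_hole :: "'v set \<Rightarrow> ('v \<Rightarrow> 'v \<Rightarrow> bool) \<Rightarrow> bool" where
  "has_odd_hole V E \<longleftrightarrow>
     (\<exists>vs. set vs \<subseteq> V \<and> induced_cycle E vs \<and> odd (length vs) \<and> length vs \<ge> 5)"

definition clique :: "('v \<Rightarrow> 'v \<Rightarrow> bool) \<Rightarrow> 'v set \<Rightarrow> bool" where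
  "clique E K \<longleftrightarrow> (\<forall>u\<in>K. \<forall>v\<in>K. u \<noteq> v \<longrightarrow> E u v)"

definition maximal_clique :: "'v set \<Rightarrow> ('v \<Rightarrow> 'v \<Rightarrow> bool) \<Rightarrow> 'v set \<Rightarrow> bool" where
  "maximal_clique V E K \<longleftrightarrow> K \<subseteq> V \<and> clique E K \<and>
     (\<forall>v\<in>V - K. \<not> clique E (insert v K))"

definition consecutive :: "'v list \<Rightarrow> 'v \<Rightarrow> 'v \<Rightarrow> bool" where
  "consecutive vs u v \<longleftrightarrow>
     (\<exists>i<length vs. {u, v} = {vs ! i, vs ! ((i + 1) mod length vs)})"

definition multisun_rim :: "'v set \<Rightarrow> ('v \<Rightarrow> 'v \<Rightarrow> bool) \<Rightarrow> 'v list \<Rightarrow> bool" where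
  "multisun_rim V E vs \<longleftrightarrow>
     finite V \<and> odd (card V) \<and> diamond_free V E \<and>
     distinct vs \<and> set vs = V \<and> length vs \<ge> 3 \<and>
     {K. maximal_clique V E K \<and> card K = 2} =
       {{vs ! i, vs ! ((i + 1) mod length vs)} | i. i < length vs} \<and>
     (\<forall>K. maximal_clique V E K \<and> card K \<noteq> 2 \<longrightarrow>
        (\<forall>u\<in>K. \<forall>v\<in>K. u \<noteq> v \<longrightarrow> \<not> consecutive vs u v))"

definition multisun :: "'v set \<Rightarrow> ('v \<Rightarrow> 'v \<Rightarrow> bool) \<Rightarrow> bool" where
  "multisun V E \<longleftrightarrow> (\<exists>vs. multisun_rim V E vs)"

definition inscribed_cliques :: "'v set \<Rightarrow> ('v \<Rightarrow> 'v \<Rightarrow> bool) \<Rightarrow> 'v set set" where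
  "inscribed_cliques V E = {K. maximal_clique V E K \<and> card K \<noteq> 2}"

definition delete_cliques :: "('v \<Rightarrow> 'v \<Rightarrow> bool) \<Rightarrow> 'v set set \<Rightarrow> 'v \<Rightarrow> 'v \<Rightarrow> bool" where
  "delete_cliques E S u v \<longleftrightarrow> E u v \<and> \<not> (\<exists>K\<in>S. u \<in> K \<and> v \<in> K)"

text \<open>HOH-free multisun: neither the multisun (S = {}) nor any sub-multisun
(S a nonempty proper subset of the inscribed cliques) has an odd hole.\<close>
definition HOH_free_multisun :: "'v set \<Rightarrow> ('v \<Rightarrow> 'v \<Rightarrow> bool) \<Rightarrow> bool" where
  "HOH_free_multisun V E \<longleftrightarrow> multisun V E \<and>
     (\<forall>S. S \<subset> inscribed_cliques V E \<longrightarrow> \<not> has_odd_hole V (delete_cliques E S))"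

end

theory Submission
  imports Defs
begin

text \<open>A matrix is unbalanced iff it has an odd cycle submatrix: a 2-regular square
  submatrix of odd order splits into cycles of the bipartite row--column graph, one of which
  is odd. Conversely \<open>C_3\<close> is such a cycle, a diamond of \<open>G_A\<close> in a linear matrix yields
  a \<open>C_3\<close>, and the rows along an odd hole or along the rim of a multisun form one.

  For sufficiency take a shortest odd cycle submatrix. Since the matrix is linear and
  \<open>C_3\<close>-free, the maximal cliques of \<open>G_A\<close> on its columns are rows, and a row through
  two non-consecutive columns would cut the cycle into two shorter ones, one of them odd.
  So the columns carry a multisun with the cycle as rim. It is HOH-free: an odd hole left
  after deleting some inscribed cliques is again a cycle submatrix, hence uses all columns,
  but a column of a surviving inscribed clique has three neighbours on it.\<close>

section \<open>Cyclic index arithmetic\<close>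

lemma Suc_mod_eq_if: "i < n \<Longrightarrow> Suc i mod n = (if Suc i = n then 0 else Suc i)"
  by (auto simp: mod_less)

lemma mod_less_if_2_le: "2 \<le> n \<Longrightarrow> x mod n < (n::nat)"
  by simp

lemma mod_less_if_3_le: "3 \<le> n \<Longrightarrow> x mod n < (n::nat)"
  by simp

lemma pred_mod_eq_if: "(j::nat) < n \<Longrightarrow> (j + n - 1) mod n = (if j = 0 then n - 1 else j - 1)"
proof (cases "j = 0")
  case False
  assume "j < n"
  then have "j + n - 1 = (j - 1) + n" using False by arith
  then have "(j + n - 1) mod n = (j - 1) mod n" by simp
  then show ?thesis using \<open>j < n\<close> False by simp
qed simp
lemma Suc_mod_inj:
  assumes "i < n" "j < n" "Suc i mod n = Suc j mod n"
  shows "i = j"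
  using assms by (auto simp: Suc_mod_eq_if split: if_splits)

lemma Suc_pred_mod:
  assumes "(j::nat) < n"
  shows "Suc ((j + n - 1) mod n) mod n = j"
proof (cases "j = 0")
  case True
  then have "Suc (n - 1) = n" using assms by simp
  then show ?thesis using True assms by (simp add: pred_mod_eq_if)
next
  case False
  then have "(j + n - 1) mod n = j - 1" using pred_mod_eq_if[OF assms] by simp
  moreover have "Suc (j - 1) = j" using False by simp
  ultimately show ?thesis using assms by simp
qed

lemma Suc_Suc_mod_neq:
  assumes "3 \<le> n" "i < n"
  shows "Suc (Suc i mod n) mod n \<noteq> i"
  using assms by (auto simp: Suc_mod_eq_if)

lemma cyclic_edge_eq:
  assumes "3 \<le> n" "i < n" "j < n" "{i, Suc i mod n} = {j, Suc j mod n}"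
  shows "i = j"
  using assms by (auto simp: doubleton_eq_iff Suc_mod_eq_if split: if_splits)

lemma cyclic_no_triangle:
  assumes "4 \<le> n" "a < n" "b < n" "c < n" "a \<noteq> b" "a \<noteq> c" "b \<noteq> c"
    "b = Suc a mod n \<or> a = Suc b mod n" "c = Suc a mod n \<or> a = Suc c mod n"
    "c = Suc b mod n \<or> b = Suc c mod n"
  shows False
  using assms unfolding Suc_mod_eq_if[OF assms(2)] Suc_mod_eq_if[OF assms(3)] Suc_mod_eq_if[OF assms(4)]
  by (auto split: if_splits)

lemma mod_offset_eq:
  assumes "a < k" "b < (k::nat)"
  shows "(a + (b + k - a) mod k) mod k = b"
proof -
  have "(a + (b + k - a) mod k) mod k = (a + (b + k - a)) mod k" by (simp add: mod_add_right_eq)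
  also have "a + (b + k - a) = b + k" using assms(1) by simp
  finally show ?thesis using assms(2) by simp
qed

section \<open>Cycle submatrices\<close>

text \<open>An odd \<open>cycle_submatrix\<close> is the incidence matrix of a chordless odd cycle of
  the bipartite row--column graph; these are exactly the minimal unbalanced submatrices.\<close>

definition cycle_submatrix :: "('r \<Rightarrow> 'c \<Rightarrow> bool) \<Rightarrow> 'r list \<Rightarrow> 'c list \<Rightarrow> bool" where
  "cycle_submatrix A rs cs \<longleftrightarrow> length rs = length cs \<and> 3 \<le> length cs \<and> distinct rs \<and> distinct cs \<and>
     (\<forall>i<length cs. {c \<in> set cs. A (rs!i) c} = {cs!i, cs!(Suc i mod length cs)})"

lemma cycle_submatrix_row_card:
  assumes "cycle_submatrix A rs cs" "r \<in> set rs"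
  shows "card {c \<in> set cs. A r c} = 2"
proof -
  from assms obtain i where i: "i < length cs" "r = rs!i"
    unfolding cycle_submatrix_def by (metis in_set_conv_nth)
  have d: "distinct cs" "3 \<le> length cs" using assms(1) unfolding cycle_submatrix_def by auto
  have "i \<noteq> Suc i mod length cs" using d i by (simp add: Suc_mod_eq_if)
  moreover have "Suc i mod length cs < length cs" using d by (simp add: mod_less_if_3_le)
  ultimately have "cs!i \<noteq> cs!(Suc i mod length cs)"
    using d i by (simp add: nth_eq_iff_index_eq)
  moreover have "{c \<in> set cs. A r c} = {cs!i, cs!(Suc i mod length cs)}"
    using assms(1) i unfolding cycle_submatrix_def by auto
  ultimately show ?thesis by simp
qed

lemma cycle_submatrix_column:
  assumes "cycle_submatrix A rs cs" "j < length cs"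
  shows "{r \<in> set rs. A r (cs!j)} = {rs!j, rs!((j + length cs - 1) mod length cs)}"
proof -
  let ?n = "length cs" and ?p = "(j + length cs - 1) mod length cs"
  have c: "length rs = ?n" "3 \<le> ?n" "distinct cs"
    "\<And>i. i < ?n \<Longrightarrow> {c \<in> set cs. A (rs!i) c} = {cs!i, cs!(Suc i mod ?n)}"
    using assms(1) unfolding cycle_submatrix_def by auto
  have key: "A (rs!i) (cs!j) \<longleftrightarrow> (i = j \<or> i = ?p)" if "i < ?n" for i
  proof -
    have "A (rs!i) (cs!j) \<longleftrightarrow> cs!j \<in> {c \<in> set cs. A (rs!i) c}" using assms(2) by simp
    also have "\<dots> \<longleftrightarrow> cs!j \<in> {cs!i, cs!(Suc i mod ?n)}" by (simp only: c(4)[OF that])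
    also have "\<dots> \<longleftrightarrow> (j = i \<or> j = Suc i mod ?n)"
      using c(2,3) that assms(2) by (simp add: nth_eq_iff_index_eq mod_less_if_3_le)
    also have "\<dots> \<longleftrightarrow> (i = j \<or> i = ?p)"
      unfolding Suc_mod_eq_if[OF that] pred_mod_eq_if[OF assms(2)]
      using that assms(2) c(2) by (cases "j = 0"; cases "Suc i = ?n"; simp; arith)
    finally show ?thesis .
  qed
  have p: "?p < ?n" using c(2) by (simp add: mod_less_if_3_le)
  show ?thesis
  proof (rule set_eqI, rule iffI)
    fix r assume "r \<in> {r \<in> set rs. A r (cs!j)}"
    then obtain i where "i < ?n" "r = rs!i" "A (rs!i) (cs!j)"
      using c(1) by (metis (no_types, lifting) in_set_conv_nth mem_Collect_eq)
    then show "r \<in> {rs!j, rs!?p}" using key by blast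
  next
    fix r assume "r \<in> {rs!j, rs!?p}"
    then show "r \<in> {r \<in> set rs. A r (cs!j)}"
      using key[OF assms(2)] key[OF p] p assms(2) c(1) by auto
  qed
qed

lemma cycle_submatrix_column_card:
  assumes "cycle_submatrix A rs cs" "c \<in> set cs"
  shows "card {r \<in> set rs. A r c} = 2"
proof -
  from assms obtain j where j: "j < length cs" "c = cs!j" by (metis in_set_conv_nth)
  have c: "length rs = length cs" "3 \<le> length cs" "distinct rs"
    using assms(1) unfolding cycle_submatrix_def by auto
  have "j \<noteq> (j + length cs - 1) mod length cs"
    using j c(2) unfolding pred_mod_eq_if[OF j(1)] by auto
  moreover have "(j + length cs - 1) mod length cs < length rs" using c by (simp add: mod_less_if_3_le)
  ultimately have "rs!j \<noteq> rs!((j + length cs - 1) mod length cs)"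
    using c j by (simp add: nth_eq_iff_index_eq)
  then show ?thesis using cycle_submatrix_column[OF assms(1) j(1)] j by simp
qed

lemma odd_cycle_submatrix_not_balanced:
  assumes "cycle_submatrix A rs cs" "odd (length cs)" "set rs \<subseteq> R" "set cs \<subseteq> C"
  shows "\<not> balanced R C A"
  unfolding balanced_def
proof (rule notI, elim notE, intro exI conjI)
  show "set rs \<subseteq> R" "set cs \<subseteq> C" by fact+
  show "card (set rs) = card (set cs)" "odd (card (set rs))"
    using assms(1,2) unfolding cycle_submatrix_def by (auto simp: distinct_card)
  show "\<forall>r\<in>set rs. card {c \<in> set cs. A r c} = 2"
    using cycle_submatrix_row_card[OF assms(1)] by auto
  show "\<forall>c\<in>set cs. card {r \<in> set rs. A r c} = 2"
    using cycle_submatrix_column_card[OF assms(1)] by auto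
qed

lemma cycle_submatrix_of_rows:
  assumes "distinct vs" "3 \<le> length vs"
    "\<forall>l<length vs. {c \<in> set vs. A (\<rho> l) c} = {vs!l, vs!(Suc l mod length vs)}"
  shows "cycle_submatrix A (map \<rho> [0..<length vs]) vs"
proof -
  let ?m = "length vs"
  have "inj_on \<rho> {0..<?m}"
  proof (rule inj_onI)
    fix l l' assume l: "l \<in> {0..<?m}" "l' \<in> {0..<?m}" "\<rho> l = \<rho> l'"
    have "{vs!l, vs!(Suc l mod ?m)} = {vs!l', vs!(Suc l' mod ?m)}"
      using assms(3) l by (metis atLeastLessThan_iff)
    then have "(!) vs ` {l, Suc l mod ?m} = (!) vs ` {l', Suc l' mod ?m}" by simp
    moreover have "inj_on ((!) vs) {..<?m}" using assms(1) by (simp add: inj_on_nth)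
    moreover have "{l, Suc l mod ?m} \<subseteq> {..<?m}" "{l', Suc l' mod ?m} \<subseteq> {..<?m}"
      using l assms(2) by (auto simp: mod_less_if_3_le)
    ultimately have "{l, Suc l mod ?m} = {l', Suc l' mod ?m}" using inj_on_image_eq_iff by metis
    then show "l = l'" using cyclic_edge_eq[OF assms(2)] l by auto
  qed
  then show ?thesis unfolding cycle_submatrix_def using assms by (auto simp: distinct_map)
qed

lemma cycle_submatrix_rotate:
  assumes "cycle_submatrix A rs cs"
  shows "cycle_submatrix A (rotate n rs) (rotate n cs)"
proof -
  let ?k = "length cs"
  have c: "length rs = ?k" "3 \<le> ?k" "distinct rs" "distinct cs"
    "\<And>i. i < ?k \<Longrightarrow> {c \<in> set cs. A (rs!i) c} = {cs!i, cs!(Suc i mod ?k)}"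
    using assms unfolding cycle_submatrix_def by auto
  show ?thesis unfolding cycle_submatrix_def
  proof (intro conjI allI impI)
    show "length (rotate n rs) = length (rotate n cs)" "3 \<le> length (rotate n cs)"
      "distinct (rotate n rs)" "distinct (rotate n cs)" using c by auto
  next
    fix i assume "i < length (rotate n cs)"
    then have i: "i < ?k" by simp
    have p: "(n + i) mod ?k < ?k" using c(2) by (simp add: mod_less_if_3_le)
    have si: "Suc i mod ?k < ?k" using c(2) by (simp add: mod_less_if_3_le)
    have "rotate n rs ! i = rs ! ((n + i) mod ?k)" using i c(1) by (simp add: nth_rotate)
    moreover have "rotate n cs ! i = cs ! ((n + i) mod ?k)" using i by (simp add: nth_rotate)
    moreover have "rotate n cs ! (Suc i mod ?k) = cs ! (Suc ((n + i) mod ?k) mod ?k)"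
      using si by (simp add: nth_rotate mod_add_right_eq mod_Suc_eq)
    ultimately show "{c \<in> set (rotate n cs). A (rotate n rs ! i) c} =
      {rotate n cs ! i, rotate n cs ! (Suc i mod length (rotate n cs))}"
      using c(5)[OF p] by simp
  qed
qed

lemma cycle_submatrix_shortcut:
  assumes cy: "cycle_submatrix A rs cs" and r: "{c \<in> set cs. A r c} = {cs!0, cs!j}"
    and j: "2 \<le> j" "j < length cs"
  shows "cycle_submatrix A (take j rs @ [r]) (take (Suc j) cs)"
proof -
  let ?k = "length cs" and ?rs = "take j rs @ [r]" and ?cs = "take (Suc j) cs"
  have c: "length rs = ?k" "3 \<le> ?k" "distinct rs" "distinct cs"
    "\<And>i. i < ?k \<Longrightarrow> {c \<in> set cs. A (rs!i) c} = {cs!i, cs!(Suc i mod ?k)}"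
    using cy unfolding cycle_submatrix_def by auto
  have rn: "r \<notin> set (take j rs)"
  proof
    assume "r \<in> set (take j rs)"
    then obtain l where l: "l < j" "r = rs!l" using c(1) j by (auto simp: in_set_conv_nth)
    then have eq: "{cs!l, cs!(Suc l)} = {cs!0, cs!j}" using c(5)[of l] r j by simp
    have "Suc l \<noteq> 0" "Suc l \<noteq> j \<or> l \<noteq> 0" "l \<noteq> j" using l j by auto
    moreover have "l < ?k" "Suc l < ?k" "0 < ?k" using l j by auto
    ultimately have "cs!(Suc l) \<noteq> cs!0 \<and> (cs!(Suc l) \<noteq> cs!j \<or> cs!l \<noteq> cs!0) \<and> cs!l \<noteq> cs!j"
      using c(4) j by (simp add: nth_eq_iff_index_eq)
    then show False using eq by (auto simp: doubleton_eq_iff)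
  qed
  have len: "length ?rs = Suc j" "length ?cs = Suc j" using c(1) j by auto
  have mem: "cs!t \<in> set ?cs" if "t \<le> j" for t
    using that len by (metis in_set_conv_nth le_imp_less_Suc nth_take)
  have sub: "set ?cs \<subseteq> set cs" by (rule set_take_subset)
  show ?thesis unfolding cycle_submatrix_def
  proof (intro conjI allI impI)
    show "length ?rs = length ?cs" "3 \<le> length ?cs" using len j by auto
    show "distinct ?rs" using rn c(3) by simp
    show "distinct ?cs" using c(4) by simp
  next
    fix i assume i: "i < length ?cs"
    show "{c \<in> set ?cs. A (?rs!i) c} = {?cs!i, ?cs!(Suc i mod length ?cs)}"
    proof (cases "i < j")
      case True
      have "{c \<in> set ?cs. A (rs!i) c} = set ?cs \<inter> {c \<in> set cs. A (rs!i) c}" using sub by auto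
      also have "\<dots> = {cs!i, cs!(Suc i)}" using c(5)[of i] mem[of i] mem[of "Suc i"] True j by auto
      finally show ?thesis using True c(1) j len by (simp add: nth_append)
    next
      case False
      then have "i = j" using i len by simp
      have "{c \<in> set ?cs. A r c} = set ?cs \<inter> {c \<in> set cs. A r c}" using sub by auto
      also have "\<dots> = {cs!0, cs!j}" using r mem[of 0] mem[of j] by auto
      finally show ?thesis using \<open>i = j\<close> c(1) j len by (auto simp: nth_append)
    qed
  qed
qed

lemma all_less_3_iff: "(\<forall>i<(3::nat). P i) \<longleftrightarrow> P 0 \<and> P 1 \<and> P 2"
  by (auto simp: less_Suc_eq numeral_3_eq_3 numeral_2_eq_2)

lemma contains_C3_cycle_submatrix:
  assumes "contains_C3 R C A"
  obtains rs cs where "cycle_submatrix A rs cs" "length cs = 3" "set rs \<subseteq> R" "set cs \<subseteq> C"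
proof -
  obtain f g where fg: "inj_on g {0..<3}" "f ` {0..<3} \<subseteq> R" "g ` {0..<3} \<subseteq> C"
    "\<forall>i<3. \<forall>j<3. A (f i) (g j) \<longleftrightarrow> C3 i j"
    using assms unfolding contains_C3_def by (elim exE conjE) (rule that)
  have entries: "A (f 0) (g 0)" "A (f 0) (g 1)" "\<not> A (f 0) (g 2)"
    "\<not> A (f 1) (g 0)" "A (f 1) (g 1)" "A (f 1) (g 2)"
    "A (f 2) (g 0)" "\<not> A (f 2) (g 1)" "A (f 2) (g 2)"
    using fg(4) unfolding all_less_3_iff C3_def by simp_all
  define vs where "vs = map g [0..<3]"
  have lv: "length vs = 3" unfolding vs_def by simp
  have "cycle_submatrix A (map f [0..<length vs]) vs"
  proof (rule cycle_submatrix_of_rows)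
    show "distinct vs" unfolding vs_def using fg(1) by (simp add: distinct_map)
    show "3 \<le> length vs" using lv by simp
    have sv: "set vs = {g 0, g 1, g 2}" unfolding vs_def
      by (auto simp: numeral_3_eq_3 numeral_2_eq_2 upt_rec)
    show "\<forall>l<length vs. {c \<in> set vs. A (f l) c} = {vs ! l, vs ! (Suc l mod length vs)}"
      unfolding lv all_less_3_iff sv unfolding vs_def using entries by (auto simp: numeral_2_eq_2)
  qed
  moreover have "set (map f [0..<length vs]) \<subseteq> R" using fg(2) lv by auto
  moreover have "set vs \<subseteq> C" using fg(3) unfolding vs_def by auto
  ultimately show ?thesis using that lv by blast
qed

section \<open>Unbalanced matrices contain odd cycle submatrices\<close>

definition two_regular :: "'r set \<Rightarrow> 'c set \<Rightarrow> ('r \<Rightarrow> 'c \<Rightarrow> bool) \<Rightarrow> bool" where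
  "two_regular R' C' A \<longleftrightarrow> finite R' \<and> finite C' \<and> (\<forall>r\<in>R'. card {c\<in>C'. A r c} = 2) \<and>
     (\<forall>c\<in>C'. card {r\<in>R'. A r c} = 2)"

text \<open>Paths and cycles in the bipartite graph of rows and columns, with an edge for
  each entry \<open>1\<close>.\<close>

definition alternating_cycle ::
  "('r \<Rightarrow> 'c \<Rightarrow> bool) \<Rightarrow> 'r set \<Rightarrow> 'c set \<Rightarrow> 'r list \<Rightarrow> 'c list \<Rightarrow> bool" where
  "alternating_cycle A R' C' rs cs \<longleftrightarrow> length rs = length cs \<and> 2 \<le> length cs \<and> distinct rs \<and>
     distinct cs \<and> set rs \<subseteq> R' \<and> set cs \<subseteq> C' \<and>
     (\<forall>i<length cs. A (rs!i) (cs!i) \<and> A (rs!i) (cs!(Suc i mod length cs)))"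

definition alternating_path ::
  "('r \<Rightarrow> 'c \<Rightarrow> bool) \<Rightarrow> 'r set \<Rightarrow> 'c set \<Rightarrow> 'r list \<Rightarrow> 'c list \<Rightarrow> bool" where
  "alternating_path A R' C' rs cs \<longleftrightarrow> length cs = Suc (length rs) \<and> distinct rs \<and>
     distinct cs \<and> set rs \<subseteq> R' \<and> set cs \<subseteq> C' \<and>
     (\<forall>i<length rs. A (rs!i) (cs!i) \<and> A (rs!i) (cs!(Suc i)))"

lemma card_2_elements_eq: "card S = 2 \<Longrightarrow> a \<in> S \<Longrightarrow> b \<in> S \<Longrightarrow> a \<noteq> b \<Longrightarrow> S = {a, b}"
  by (auto simp: card_2_iff)

lemma card_2_no_three:
  "card S = 2 \<Longrightarrow> a \<in> S \<Longrightarrow> b \<in> S \<Longrightarrow> c \<in> S \<Longrightarrow> a \<noteq> b \<Longrightarrow> a \<noteq> c \<Longrightarrow> b \<noteq> c \<Longrightarrow> False"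
  by (auto simp: card_2_iff)

lemma card_2_obtain_other:
  assumes "card S = 2"
  obtains b where "b \<in> S" "b \<noteq> a"
proof -
  obtain x y where "S = {x, y}" "x \<noteq> y" using assms by (auto simp: card_2_iff)
  then show ?thesis using that by (cases "x = a") auto
qed

lemma alternating_path_next_row:
  assumes reg: "two_regular R' C' A" and p: "alternating_path A R' C' rs cs"
  obtains r' c' where "r' \<in> R'" "r' \<notin> set rs" "A r' (cs!length rs)"
    "c' \<in> C'" "A r' c'" "c' \<noteq> cs!length rs"
proof -
  let ?m = "length rs" and ?cm = "cs!length rs"
  have p': "length cs = Suc ?m" "distinct cs" "set rs \<subseteq> R'" "set cs \<subseteq> C'"
    "\<And>i. i < ?m \<Longrightarrow> A (rs!i) (cs!i) \<and> A (rs!i) (cs!(Suc i))"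
    using p unfolding alternating_path_def by auto
  have "?cm \<in> set cs" using p'(1) by simp
  then have cm: "?cm \<in> C'" using p'(4) by blast
  \<comment> \<open>\<open>rs!(?m - 1)\<close> is the last row of the path; for \<open>?m = 0\<close> it is junk, and harmless.\<close>
  obtain r' where r': "r' \<in> R'" "A r' ?cm" "r' \<noteq> rs!(?m - 1)"
    using card_2_obtain_other[of "{r\<in>R'. A r ?cm}"] reg cm unfolding two_regular_def by blast
  have "r' \<notin> set rs"
  proof
    assume "r' \<in> set rs"
    then obtain i where i: "i < ?m" "r' = rs!i" by (metis in_set_conv_nth)
    have "Suc i \<noteq> ?m"
    proof
      assume "Suc i = ?m"
      then have "i = ?m - 1" by simp
      then show False using r'(3) i by auto
    qed
    then have si: "Suc i < ?m" using i by simp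
    have "card {c\<in>C'. A r' c} = 2" using reg r'(1) unfolding two_regular_def by blast
    moreover have "cs!i \<in> set cs" "cs!(Suc i) \<in> set cs" using p'(1) i si by simp_all
    then have "cs!i \<in> {c\<in>C'. A r' c}" "cs!(Suc i) \<in> {c\<in>C'. A r' c}" "?cm \<in> {c\<in>C'. A r' c}"
      using p'(5)[OF i(1)] i(2) p'(4) cm r'(2) by blast+
    moreover have "cs!i \<noteq> cs!(Suc i)" "cs!i \<noteq> ?cm" "cs!(Suc i) \<noteq> ?cm"
      using p'(1,2) i si by (auto simp: nth_eq_iff_index_eq)
    ultimately show False by (rule card_2_no_three)
  qed
  moreover obtain c' where "c' \<in> C'" "A r' c'" "c' \<noteq> ?cm"
    using card_2_obtain_other[of "{c\<in>C'. A r' c}"] reg r'(1) unfolding two_regular_def by blast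
  ultimately show ?thesis using that r'(1,2) by blast
qed

lemma alternating_path_snoc:
  assumes p: "alternating_path A R' C' rs cs"
    and r': "r' \<in> R'" "r' \<notin> set rs" "A r' (cs!length rs)"
    and c': "c' \<in> C'" "A r' c'" "c' \<notin> set cs"
  shows "alternating_path A R' C' (rs @ [r']) (cs @ [c'])"
proof -
  have p': "length cs = Suc (length rs)"
    "\<And>i. i < length rs \<Longrightarrow> A (rs!i) (cs!i) \<and> A (rs!i) (cs!(Suc i))"
    using p unfolding alternating_path_def by auto
  have "A ((rs @ [r'])!i) ((cs @ [c'])!i) \<and> A ((rs @ [r'])!i) ((cs @ [c'])!(Suc i))"
    if "i < Suc (length rs)" for i
  proof (cases "i < length rs")
    case True
    then show ?thesis using p'(2)[OF True] p'(1) by (simp add: nth_append)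
  next
    case False
    then have "i = length rs" using that by simp
    then show ?thesis using r'(3) c'(2) p'(1) by (simp add: nth_append)
  qed
  then show ?thesis using p r' c' unfolding alternating_path_def by auto
qed

text \<open>If the new row returns to the path, it can only return to the first column:
  every later column already has both of its rows on the path.\<close>

lemma alternating_path_close:
  assumes reg: "two_regular R' C' A" and p: "alternating_path A R' C' rs cs"
    and r': "r' \<in> R'" "r' \<notin> set rs" "A r' (cs!length rs)"
    and c': "c' \<in> set cs" "A r' c'" "c' \<noteq> cs!length rs"
  shows "alternating_cycle A R' C' (rs @ [r']) cs"
proof -
  let ?m = "length rs"
  have p': "length cs = Suc ?m" "distinct rs" "distinct cs" "set rs \<subseteq> R'" "set cs \<subseteq> C'"
    "\<And>i. i < ?m \<Longrightarrow> A (rs!i) (cs!i) \<and> A (rs!i) (cs!(Suc i))"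
    using p unfolding alternating_path_def by auto
  obtain j where j: "j < length cs" "c' = cs!j" using c'(1) by (metis in_set_conv_nth)
  have "j \<noteq> ?m" using j c'(3) by auto
  have j0: "j = 0"
  proof (rule ccontr)
    assume "j \<noteq> 0"
    then have j1: "j - 1 < ?m" "j < ?m" "Suc (j - 1) = j" using j \<open>j \<noteq> ?m\<close> p'(1) by auto
    have "card {r\<in>R'. A r c'} = 2" using reg c'(1) p'(5) unfolding two_regular_def by blast
    moreover have "rs!(j-1) \<in> {r\<in>R'. A r c'}" "rs!j \<in> {r\<in>R'. A r c'}" "r' \<in> {r\<in>R'. A r c'}"
      using p'(4) p'(6)[OF j1(1)] p'(6)[OF j1(2)] j1 j(2) r'(1) c'(2) by (auto dest: nth_mem)
    moreover have "rs!(j-1) \<noteq> rs!j" using p'(2) j1 by (simp add: nth_eq_iff_index_eq)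
    moreover have "rs!(j-1) \<noteq> r'" "rs!j \<noteq> r'" using r'(2) j1 by auto
    ultimately show False by (rule card_2_no_three)
  qed
  then have "?m \<noteq> 0" using j c'(3) by auto
  show ?thesis unfolding alternating_cycle_def
  proof (intro conjI)
    show "length (rs @ [r']) = length cs" using p'(1) by simp
    show "2 \<le> length cs" using p'(1) \<open>?m \<noteq> 0\<close> by linarith
    show "distinct (rs @ [r'])" "set (rs @ [r']) \<subseteq> R'" using p'(2,4) r'(1,2) by simp_all
    show "distinct cs" "set cs \<subseteq> C'" using p'(3,5) by simp_all
    show "\<forall>i<length cs. A ((rs @ [r'])!i) (cs!i) \<and> A ((rs @ [r'])!i) (cs!(Suc i mod length cs))"
    proof (intro allI impI)
      fix i assume i: "i < length cs"
      show "A ((rs @ [r'])!i) (cs!i) \<and> A ((rs @ [r'])!i) (cs!(Suc i mod length cs))"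
      proof (cases "i < ?m")
        case True
        then show ?thesis using p'(6)[OF True] p'(1) by (simp add: nth_append)
      next
        case False
        then have "i = ?m" using i p'(1) by simp
        then show ?thesis using r'(3) c'(2) p'(1) j j0 by (simp add: nth_append)
      qed
    qed
  qed
qed

lemma alternating_path_extends_to_cycle:
  assumes reg: "two_regular R' C' A"
  shows "alternating_path A R' C' rs cs \<Longrightarrow> \<exists>rs' cs'. alternating_cycle A R' C' rs' cs'"
proof (induction "card C' - length cs" arbitrary: rs cs rule: less_induct)
  case less
  obtain r' c' where r': "r' \<in> R'" "r' \<notin> set rs" "A r' (cs!length rs)"
    and c': "c' \<in> C'" "A r' c'" "c' \<noteq> cs!length rs"
    using alternating_path_next_row[OF reg less.prems] by blast
  show ?case
  proof (cases "c' \<in> set cs")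
    case True
    then show ?thesis using alternating_path_close[OF reg less.prems r' True c'(2,3)] by blast
  next
    case False
    have cs: "distinct cs" "set cs \<subseteq> C'" using less.prems unfolding alternating_path_def by auto
    have "finite C'" using reg unfolding two_regular_def by simp
    then have "card (set (c' # cs)) \<le> card C'" using cs(2) c'(1) by (intro card_mono) auto
    then have "card C' - length (cs @ [c']) < card C' - length cs"
      using cs(1) False by (simp add: distinct_card)
    then show ?thesis
      using less.hyps alternating_path_snoc[OF less.prems r' c'(1,2) False] by blast
  qed
qed

lemma alternating_cycle_row:
  assumes reg: "two_regular R' C' A" and w: "alternating_cycle A R' C' rs cs" and i: "i < length cs"
  shows "{c\<in>C'. A (rs!i) c} = {cs!i, cs!(Suc i mod length cs)}"
proof -
  let ?n = "length cs"
  have w': "length rs = ?n" "2 \<le> ?n" "distinct cs" "set rs \<subseteq> R'" "set cs \<subseteq> C'"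
    "A (rs!i) (cs!i)" "A (rs!i) (cs!(Suc i mod ?n))"
    using w i unfolding alternating_cycle_def by auto
  have si: "Suc i mod ?n < ?n" using w'(2) by (simp add: mod_less_if_2_le)
  have "i \<noteq> Suc i mod ?n" using i w'(2) unfolding Suc_mod_eq_if[OF i] by auto
  then have ne: "cs!i \<noteq> cs!(Suc i mod ?n)" using w'(3) i si by (simp add: nth_eq_iff_index_eq)
  have "card {c\<in>C'. A (rs!i) c} = 2"
    using reg w'(1,4) i unfolding two_regular_def by (metis nth_mem subsetD)
  moreover have "cs!i \<in> {c\<in>C'. A (rs!i) c}" "cs!(Suc i mod ?n) \<in> {c\<in>C'. A (rs!i) c}"
    using w'(5,6,7) i si by (auto dest: nth_mem)
  ultimately show ?thesis using card_2_elements_eq ne by metis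
qed

lemma alternating_cycle_column:
  assumes reg: "two_regular R' C' A" and w: "alternating_cycle A R' C' rs cs" and j: "j < length cs"
  shows "{r\<in>R'. A r (cs!j)} = {rs!j, rs!((j + length cs - 1) mod length cs)}"
proof -
  let ?n = "length cs" and ?p = "(j + length cs - 1) mod length cs"
  have w': "length rs = ?n" "2 \<le> ?n" "distinct rs" "set rs \<subseteq> R'" "set cs \<subseteq> C'"
    "\<forall>i<?n. A (rs!i) (cs!i) \<and> A (rs!i) (cs!(Suc i mod ?n))"
    using w unfolding alternating_cycle_def by auto
  have p: "?p < ?n" using w'(2) by (simp add: mod_less_if_2_le)
  have "j \<noteq> ?p" using j w'(2) unfolding pred_mod_eq_if[OF j] by auto
  then have ne: "rs!j \<noteq> rs!?p" using w'(1,3) j p by (simp add: nth_eq_iff_index_eq)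
  have "card {r\<in>R'. A r (cs!j)} = 2"
    using reg w'(5) j unfolding two_regular_def by (metis nth_mem subsetD)
  moreover have "rs!j \<in> {r\<in>R'. A r (cs!j)}" using w'(1,4,6) j by (auto dest: nth_mem)
  moreover have "rs!?p \<in> {r\<in>R'. A r (cs!j)}"
    using w'(1,4) w'(6)[rule_format, OF p] p Suc_pred_mod[OF j] by (auto dest: nth_mem)
  ultimately show ?thesis using card_2_elements_eq ne by metis
qed

lemma odd_alternating_cycle_is_cycle_submatrix:
  assumes reg: "two_regular R' C' A" and w: "alternating_cycle A R' C' rs cs"
    and odd: "odd (length cs)"
  shows "cycle_submatrix A rs cs"
  unfolding cycle_submatrix_def
proof (intro conjI allI impI)
  let ?n = "length cs"
  have w': "length rs = ?n" "2 \<le> ?n" "distinct rs" "distinct cs" "set cs \<subseteq> C'"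
    using w unfolding alternating_cycle_def by auto
  show "length rs = ?n" "distinct rs" "distinct cs" by (fact w')+
  show "3 \<le> ?n" using w'(2) odd by presburger
  fix i assume i: "i < ?n"
  have "Suc i mod ?n < ?n" using w'(2) by (simp add: mod_less_if_2_le)
  then have "{cs!i, cs!(Suc i mod ?n)} \<subseteq> set cs" using i by simp
  moreover have "{c \<in> set cs. A (rs!i) c} = set cs \<inter> {c\<in>C'. A (rs!i) c}" using w'(5) by auto
  ultimately show "{c \<in> set cs. A (rs!i) c} = {cs!i, cs!(Suc i mod ?n)}"
    unfolding alternating_cycle_row[OF reg w i] by auto
qed

text \<open>Rows and columns of an alternating cycle meet no other columns and rows.\<close>

lemma two_regular_remove_alternating_cycle:
  assumes reg: "two_regular R' C' A" and w: "alternating_cycle A R' C' rs cs"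
  shows "two_regular (R' - set rs) (C' - set cs) A"
proof -
  let ?n = "length cs"
  have w': "length rs = ?n" "2 \<le> ?n"
    using w unfolding alternating_cycle_def by auto
  have rows: "{c\<in>C' - set cs. A r c} = {c\<in>C'. A r c}" if r: "r \<in> R' - set rs" for r
  proof -
    have "c \<notin> set cs" if "c \<in> C'" "A r c" for c
    proof
      assume "c \<in> set cs"
      then obtain j where j: "j < ?n" "c = cs!j" by (metis in_set_conv_nth)
      have "r \<in> {rs!j, rs!((j + ?n - 1) mod ?n)}"
        using alternating_cycle_column[OF reg w j(1)] r that j by auto
      moreover have "(j + ?n - 1) mod ?n < length rs" using w' by (simp add: mod_less_if_2_le)
      ultimately show False using r j w'(1) by (auto dest: nth_mem)
    qed
    then show ?thesis by auto
  qed
  have cols: "{r\<in>R' - set rs. A r c} = {r\<in>R'. A r c}" if c: "c \<in> C' - set cs" for c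
  proof -
    have "r \<notin> set rs" if "r \<in> R'" "A r c" for r
    proof
      assume "r \<in> set rs"
      then obtain i where i: "i < ?n" "r = rs!i" using w'(1) by (metis in_set_conv_nth)
      have "c \<in> {cs!i, cs!(Suc i mod ?n)}"
        using alternating_cycle_row[OF reg w i(1)] c that i by auto
      moreover have "Suc i mod ?n < ?n" using w' by (simp add: mod_less_if_2_le)
      ultimately show False using c i by (auto dest: nth_mem)
    qed
    then show ?thesis by auto
  qed
  show ?thesis using reg rows cols unfolding two_regular_def by auto
qed

text \<open>A 2-regular square submatrix of odd order splits into alternating cycles, one of
  which must be odd.\<close>

lemma two_regular_odd_has_odd_cycle_submatrix:
  "two_regular R' C' A \<Longrightarrow> card R' = card C' \<Longrightarrow> odd (card C') \<Longrightarrow>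
    \<exists>rs cs. cycle_submatrix A rs cs \<and> odd (length cs) \<and> set rs \<subseteq> R' \<and> set cs \<subseteq> C'"
proof (induction "card C'" arbitrary: R' C' rule: less_induct)
  case less
  have fin: "finite R'" "finite C'" using less.prems(1) unfolding two_regular_def by auto
  have "C' \<noteq> {}" using less.prems(3) by auto
  then obtain c0 where "c0 \<in> C'" by blast
  then have "alternating_path A R' C' [] [c0]" unfolding alternating_path_def by simp
  then obtain rs cs where w: "alternating_cycle A R' C' rs cs"
    using alternating_path_extends_to_cycle[OF less.prems(1)] by blast
  let ?n = "length cs"
  have w': "length rs = ?n" "2 \<le> ?n" "distinct rs" "distinct cs" "set rs \<subseteq> R'" "set cs \<subseteq> C'"
    using w unfolding alternating_cycle_def by auto
  show ?case
  proof (cases "odd ?n")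
    case True
    then show ?thesis using odd_alternating_cycle_is_cycle_submatrix[OF less.prems(1) w] w' by blast
  next
    case False
    let ?R = "R' - set rs" and ?C = "C' - set cs"
    have cC: "card ?C = card C' - ?n" using w'(4,6) fin by (simp add: card_Diff_subset distinct_card)
    have cR: "card ?R = card R' - ?n" using w'(1,3,5) fin by (simp add: card_Diff_subset distinct_card)
    have "?n \<le> card C'" using w'(4,6) fin(2) by (metis card_mono distinct_card)
    then have "card ?C < card C'" "card ?R = card ?C" "odd (card ?C)"
      using cC cR w'(2) less.prems(2,3) False by simp_all
    then show ?thesis
      using less.hyps[OF _ two_regular_remove_alternating_cycle[OF less.prems(1) w]] by blast
  qed
qed

lemma not_balanced_imp_odd_cycle_submatrix:
  assumes "finite R" "finite C" "\<not> balanced R C A"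
  shows "\<exists>rs cs. cycle_submatrix A rs cs \<and> odd (length cs) \<and> set rs \<subseteq> R \<and> set cs \<subseteq> C"
proof -
  obtain R' C' where sub: "R' \<subseteq> R" "C' \<subseteq> C" and card: "card R' = card C'" "odd (card R')"
    and deg: "\<forall>r\<in>R'. card {c\<in>C'. A r c} = 2" "\<forall>c\<in>C'. card {r\<in>R'. A r c} = 2"
    using assms(3) unfolding balanced_def by (elim notnotD[elim_format] exE conjE) (rule that)
  have "finite R'" "finite C'" using sub assms(1,2) finite_subset by auto
  then have "two_regular R' C' A" unfolding two_regular_def using deg by blast
  moreover have "odd (card C')" using card by simp
  ultimately obtain rs cs where "cycle_submatrix A rs cs" "odd (length cs)"
    "set rs \<subseteq> R'" "set cs \<subseteq> C'"
    using two_regular_odd_has_odd_cycle_submatrix card(1) by blast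
  then show ?thesis using sub by blast
qed

section \<open>Necessity of the conditions\<close>

lemma induced_cycle_adjacent_iff:
  assumes "induced_cycle E vs" "i < length vs" "j < length vs"
  shows "E (vs!i) (vs!j) \<longleftrightarrow> (j = Suc i mod length vs \<or> i = Suc j mod length vs)"
  using assms unfolding induced_cycle_def by auto

lemma induced_cycle_no_triangle:
  assumes "induced_cycle E vs" "4 \<le> length vs" "a < length vs" "b < length vs" "c < length vs"
    "a \<noteq> b" "a \<noteq> c" "b \<noteq> c" "E (vs!a) (vs!b)" "E (vs!a) (vs!c)" "E (vs!b) (vs!c)"
  shows False
  using cyclic_no_triangle[OF assms(2-8)] induced_cycle_adjacent_iff[OF assms(1)] assms by metis

lemma induced_cycle_no_three_neighbours:
  assumes ic: "induced_cycle E vs" and a: "a < length vs"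
    and t: "t1 < length vs" "t2 < length vs" "t3 < length vs" "t1 \<noteq> t2" "t1 \<noteq> t3" "t2 \<noteq> t3"
    and e: "E (vs!a) (vs!t1)" "E (vs!a) (vs!t2)" "E (vs!a) (vs!t3)"
  shows False
proof -
  let ?m = "length vs"
  have h: "t = Suc a mod ?m \<or> a = Suc t mod ?m" if "t < ?m" "E (vs!a) (vs!t)" for t
    using induced_cycle_adjacent_iff[OF ic a that(1)] that(2) by blast
  have "a \<noteq> Suc t mod ?m" if "t \<noteq> Suc a mod ?m" "t' \<noteq> Suc a mod ?m" "t \<noteq> t'" "t < ?m" "t' < ?m"
      "E (vs!a) (vs!t)" "E (vs!a) (vs!t')" for t t'
    using that h[of t] h[of t'] Suc_mod_inj[of t ?m t'] by auto
  then show False using h t e by metis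
qed

text \<open>The columns of an induced cycle of length at least four (in \<open>G_A\<close>, or in a graph
  obtained from it by deleting edges compatibly with the rows) are those of a cycle
  submatrix: the row of an edge cannot meet a third vertex of the cycle, as this would
  create a triangle.\<close>

lemma cycle_submatrix_of_induced_cycle:
  assumes ic: "induced_cycle E vs" "4 \<le> length vs"
    and edge_row: "\<And>x y. x \<in> set vs \<Longrightarrow> y \<in> set vs \<Longrightarrow> E x y \<Longrightarrow> \<exists>r\<in>R. A r x \<and> A r y"
    and row_closed: "\<And>r x y w. r \<in> R \<Longrightarrow> x \<in> set vs \<Longrightarrow> y \<in> set vs \<Longrightarrow> w \<in> set vs \<Longrightarrow>
      A r x \<Longrightarrow> A r y \<Longrightarrow> A r w \<Longrightarrow> E x y \<Longrightarrow> w \<noteq> x \<Longrightarrow> E x w"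
  obtains \<rho> where "cycle_submatrix A (map \<rho> [0..<length vs]) vs" "\<rho> ` {0..<length vs} \<subseteq> R"
proof -
  let ?m = "length vs"
  have dv: "distinct vs" using ic(1) unfolding induced_cycle_def by simp
  have sl: "Suc l mod ?m < ?m" for l using ic(2) by (simp add: mod_less_if_3_le)
  have adj: "E (vs!l) (vs!(Suc l mod ?m))" "E (vs!(Suc l mod ?m)) (vs!l)" if "l < ?m" for l
    using induced_cycle_adjacent_iff[OF ic(1) that sl] induced_cycle_adjacent_iff[OF ic(1) sl that]
    by simp_all
  have "\<forall>l<?m. \<exists>r. r \<in> R \<and> A r (vs!l) \<and> A r (vs!(Suc l mod ?m))"
    using edge_row adj(1) sl by (metis nth_mem)
  then obtain \<rho> where \<rho>: "\<And>l. l < ?m \<Longrightarrow> \<rho> l \<in> R \<and> A (\<rho> l) (vs!l) \<and> A (\<rho> l) (vs!(Suc l mod ?m))"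
    by metis
  have row: "{c \<in> set vs. A (\<rho> l) c} = {vs!l, vs!(Suc l mod ?m)}" if l: "l < ?m" for l
  proof -
    have nl: "l \<noteq> Suc l mod ?m" using l ic(2) unfolding Suc_mod_eq_if[OF l] by auto
    have "c \<in> {vs!l, vs!(Suc l mod ?m)}" if c: "c \<in> set vs" "A (\<rho> l) c" for c
    proof (rule ccontr)
      assume nc: "c \<notin> {vs!l, vs!(Suc l mod ?m)}"
      obtain t where t: "t < ?m" "c = vs!t" using c by (metis in_set_conv_nth)
      have in_vs: "vs!l \<in> set vs" "vs!(Suc l mod ?m) \<in> set vs" using l sl by simp_all
      have "E (vs!l) c" "E (vs!(Suc l mod ?m)) c"
        using row_closed[OF _ in_vs(1,2) c(1)] row_closed[OF _ in_vs(2,1) c(1)]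
          \<rho>[OF l] adj[OF l] c(2) nc by auto
      then show False
        using induced_cycle_no_triangle[OF ic l sl t(1) nl] adj(1)[OF l] nc t by auto
    qed
    then show ?thesis using \<rho>[OF l] l sl by auto
  qed
  have "cycle_submatrix A (map \<rho> [0..<?m]) vs"
    using ic(2) row by (intro cycle_submatrix_of_rows[OF dv]) simp_all
  moreover have "\<rho> ` {0..<?m} \<subseteq> R" using \<rho> by auto
  ultimately show ?thesis by (rule that)
qed

lemma linear_matrix_row_unique:
  assumes "linear_matrix R C A" "r \<in> R" "r' \<in> R" "c \<in> C" "c' \<in> C" "c \<noteq> c'"
    "A r c" "A r c'" "A r' c" "A r' c'"
  shows "r = r'"
  using assms unfolding linear_matrix_def by blast

lemma triangle_contains_C3:
  assumes lin: "linear_matrix R C A" and C: "a \<in> C" "b \<in> C" "x \<in> C"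
    and d: "a \<noteq> b" "a \<noteq> x" "b \<noteq> x"
    and r: "r \<in> R" "A r a" "A r b" "\<not> A r x"
    and ax: "GA R A a x" and bx: "GA R A b x"
  shows "contains_C3 R C A"
proof -
  obtain r1 where r1: "r1 \<in> R" "A r1 a" "A r1 x" using ax unfolding GA_def by blast
  obtain r2 where r2: "r2 \<in> R" "A r2 b" "A r2 x" using bx unfolding GA_def by blast
  have n1: "\<not> A r1 b" using linear_matrix_row_unique[OF lin r(1) r1(1) C(1,2) d(1) r(2,3) r1(2)] r r1
    by auto
  have n2: "\<not> A r2 a" using linear_matrix_row_unique[OF lin r(1) r2(1) C(1,2) d(1) r(2,3)] r2(2) r r2
    by auto
  define f where "f i = [r, r2, r1] ! i" for i
  define g where "g i = [a, b, x] ! i" for i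
  have dr: "distinct [r, r2, r1]" using r r1 r2 n1 n2 by auto
  have dc: "distinct [a, b, x]" using d by auto
  show ?thesis unfolding contains_C3_def
  proof (intro exI conjI)
    show "inj_on f {0..<3}" unfolding f_def using inj_on_nth[OF dr, of "{0..<3}"] by simp
    show "inj_on g {0..<3}" unfolding g_def using inj_on_nth[OF dc, of "{0..<3}"] by simp
    show "f ` {0..<3} \<subseteq> R" unfolding f_def using r r1 r2
      by (auto simp: less_Suc_eq numeral_3_eq_3 numeral_2_eq_2)
    show "g ` {0..<3} \<subseteq> C" unfolding g_def using C
      by (auto simp: less_Suc_eq numeral_3_eq_3 numeral_2_eq_2)
    show "\<forall>i<3. \<forall>j<3. A (f i) (g j) = C3 i j"
      unfolding all_less_3_iff f_def g_def C3_def using r r1 r2 n1 n2 by simp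
  qed
qed

lemma not_diamond_free_contains_C3:
  assumes lin: "linear_matrix R C A" and nd: "\<not> diamond_free C (GA R A)"
  shows "contains_C3 R C A"
proof -
  obtain a b c d where abcd: "a \<in> C" "b \<in> C" "c \<in> C" "d \<in> C" "distinct [a, b, c, d]"
    "GA R A a b" "GA R A a c" "GA R A a d" "GA R A b c" "GA R A b d" "\<not> GA R A c d"
    using nd unfolding diamond_free_def by blast
  obtain r where r: "r \<in> R" "A r a" "A r b" using abcd(6) unfolding GA_def by blast
  show ?thesis
  proof (cases "A r c")
    case True
    then have "\<not> A r d" using r abcd(5,11) unfolding GA_def by auto
    then show ?thesis using triangle_contains_C3[OF lin abcd(1,2,4) _ _ _ r] abcd by auto
  next
    case False
    then show ?thesis using triangle_contains_C3[OF lin abcd(1,2,3) _ _ _ r] abcd by auto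
  qed
qed

lemma contains_C3_not_balanced: "contains_C3 R C A \<Longrightarrow> \<not> balanced R C A"
  by (metis contains_C3_cycle_submatrix odd_cycle_submatrix_not_balanced odd_numeral)

lemma odd_hole_not_balanced:
  assumes "has_odd_hole C (GA R A)"
  shows "\<not> balanced R C A"
proof -
  obtain vs where vs: "set vs \<subseteq> C" "induced_cycle (GA R A) vs" "odd (length vs)" "5 \<le> length vs"
    using assms unfolding has_odd_hole_def by blast
  have "\<exists>r\<in>R. A r x \<and> A r y" if "x \<in> set vs" "y \<in> set vs" "GA R A x y" for x y
    using that(3) unfolding GA_def by blast
  moreover have "GA R A x w" if "r \<in> R" "x \<in> set vs" "y \<in> set vs" "w \<in> set vs"
    "A r x" "A r y" "A r w" "GA R A x y" "w \<noteq> x" for r x y w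
    using that unfolding GA_def by blast
  moreover have "4 \<le> length vs" using vs(4) by simp
  ultimately obtain \<rho> where "cycle_submatrix A (map \<rho> [0..<length vs]) vs" "\<rho> ` {0..<length vs} \<subseteq> R"
    using cycle_submatrix_of_induced_cycle[OF vs(2)] by blast
  then show ?thesis using odd_cycle_submatrix_not_balanced vs(1,3) by fastforce
qed

lemma maximal_clique_eq_row_set:
  assumes K: "maximal_clique V (GA R A) K" and r: "r \<in> R" "\<forall>x\<in>K. A r x"
  shows "{c \<in> V. A r c} = K"
proof
  show "K \<subseteq> {c \<in> V. A r c}" using K r unfolding maximal_clique_def by auto
  show "{c \<in> V. A r c} \<subseteq> K"
  proof
    fix c assume c: "c \<in> {c \<in> V. A r c}"
    show "c \<in> K"
    proof (rule ccontr)
      assume "c \<notin> K"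
      moreover have "clique (GA R A) (insert c K)"
        using K c r unfolding maximal_clique_def clique_def GA_def by blast
      ultimately show False using K c unfolding maximal_clique_def by blast
    qed
  qed
qed

text \<open>The rows of the rim edges (maximal cliques of \<open>G_A\<close>) make the rim an odd cycle
  submatrix.\<close>

lemma multisun_not_balanced:
  assumes "S \<subseteq> C" "multisun S (GA R A)"
  shows "\<not> balanced R C A"
proof -
  let ?E = "GA R A"
  obtain vs where ms: "multisun_rim S ?E vs" using assms(2) unfolding multisun_def by blast
  let ?m = "length vs"
  have dv: "distinct vs" and sv: "set vs = S" and m3: "3 \<le> ?m" and oc: "odd (card S)"
    and rim: "{K. maximal_clique S ?E K \<and> card K = 2} = {{vs ! i, vs ! ((i + 1) mod ?m)} | i. i < ?m}"
    using ms unfolding multisun_rim_def by auto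
  have mc: "maximal_clique S ?E {vs!l, vs!(Suc l mod ?m)}" if "l < ?m" for l
  proof -
    have "{vs!l, vs!(Suc l mod ?m)} \<in> {{vs ! i, vs ! ((i + 1) mod ?m)} | i. i < ?m}" using that by auto
    then show ?thesis using rim by blast
  qed
  have ne: "vs!l \<noteq> vs!(Suc l mod ?m)" if l: "l < ?m" for l
  proof -
    have "l \<noteq> Suc l mod ?m" using l m3 unfolding Suc_mod_eq_if[OF l] by auto
    then show ?thesis using dv l m3 by (simp add: nth_eq_iff_index_eq mod_less_if_3_le)
  qed
  have "\<forall>l<?m. \<exists>r. r \<in> R \<and> A r (vs!l) \<and> A r (vs!(Suc l mod ?m))"
  proof (intro allI impI)
    fix l assume l: "l < ?m"
    have "?E (vs!l) (vs!(Suc l mod ?m))" using mc[OF l] ne[OF l]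
      unfolding maximal_clique_def clique_def by blast
    then show "\<exists>r. r \<in> R \<and> A r (vs!l) \<and> A r (vs!(Suc l mod ?m))" unfolding GA_def by blast
  qed
  then obtain \<rho> where \<rho>: "\<forall>l<?m. \<rho> l \<in> R \<and> A (\<rho> l) (vs!l) \<and> A (\<rho> l) (vs!(Suc l mod ?m))"
    by metis
  have "cycle_submatrix A (map \<rho> [0..<?m]) vs"
  proof (rule cycle_submatrix_of_rows[OF dv m3], intro allI impI)
    fix l assume "l < ?m"
    then show "{c \<in> set vs. A (\<rho> l) c} = {vs!l, vs!(Suc l mod ?m)}"
      using maximal_clique_eq_row_set[OF mc] \<rho> sv by simp
  qed
  moreover have "set (map \<rho> [0..<?m]) \<subseteq> R" using \<rho> by auto
  moreover have "odd ?m" using oc sv dv distinct_card by metis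
  ultimately show ?thesis using odd_cycle_submatrix_not_balanced assms(1) sv by blast
qed

section \<open>A shortest odd cycle submatrix spans an HOH-free multisun\<close>

lemma row_contains_common_neighbour:
  assumes lin: "linear_matrix R C A" and nc: "\<not> contains_C3 R C A"
    and C: "a \<in> C" "b \<in> C" "x \<in> C" and d: "a \<noteq> b" "a \<noteq> x" "b \<noteq> x"
    and r: "r \<in> R" "A r a" "A r b" and ax: "GA R A a x" and bx: "GA R A b x"
  shows "A r x"
  using triangle_contains_C3[OF lin C d r _ ax bx] nc by blast

lemma clique_in_row:
  assumes lin: "linear_matrix R C A" and nc: "\<not> contains_C3 R C A"
    and K: "K \<subseteq> C" "clique (GA R A) K" "a \<in> K" "b \<in> K" "a \<noteq> b"
  obtains r where "r \<in> R" "\<forall>x\<in>K. A r x"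
proof -
  have "GA R A a b" using K unfolding clique_def by blast
  then obtain r where r: "r \<in> R" "A r a" "A r b" unfolding GA_def by blast
  have "A r x" if x: "x \<in> K" for x
  proof (cases "x = a \<or> x = b")
    case True then show ?thesis using r by blast
  next
    case False
    have "GA R A a x" "GA R A b x" using K x False unfolding clique_def by auto
    then show ?thesis using row_contains_common_neighbour[OF lin nc _ _ _ K(5) _ _ r] K x False by auto
  qed
  then show ?thesis using r(1) that by blast
qed

lemma consecutive_iff:
  "consecutive vs u v \<longleftrightarrow> (\<exists>i<length vs. {u, v} = {vs!i, vs!(Suc i mod length vs)})"
  unfolding consecutive_def by simp

lemma rotate_to_non_consecutive:
  assumes cs: "distinct cs" "3 \<le> length cs" and uv: "u \<in> set cs" "v \<in> set cs" "u \<noteq> v"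
    "\<not> consecutive cs u v"
  obtains a j where "rotate a cs ! 0 = u" "rotate a cs ! j = v" "2 \<le> j" "j + 2 \<le> length cs"
proof -
  let ?k = "length cs"
  obtain a b where a: "a < ?k" "u = cs!a" and b: "b < ?k" "v = cs!b"
    using uv(1,2) by (metis in_set_conv_nth)
  define j where "j = (b + ?k - a) mod ?k"
  have j: "j < ?k" "(a + j) mod ?k = b"
    unfolding j_def using mod_offset_eq[OF a(1) b(1)] cs(2) by (simp_all add: mod_less_if_3_le)
  have "0 < ?k" using cs(2) by linarith
  then have "rotate a cs ! 0 = u" "rotate a cs ! j = v" using a b j by (simp_all add: nth_rotate)
  moreover have "j \<noteq> 0"
  proof
    assume "j = 0"
    then have "b = a" using j(2) a(1) by simp
    then show False using a b uv(3) by simp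
  qed
  moreover have "j \<noteq> 1"
  proof
    assume "j = 1"
    then have "{u, v} = {cs!a, cs!(Suc a mod ?k)}" using j(2) a b by simp
    then show False using a(1) uv(4) unfolding consecutive_iff by blast
  qed
  moreover have "j \<noteq> ?k - 1"
  proof
    assume "j = ?k - 1"
    then have "b = (a + ?k - 1) mod ?k" using j(2) cs(2) by simp
    then have "Suc b mod ?k = Suc (a + ?k - 1) mod ?k" by (simp add: mod_Suc_eq)
    also have "Suc (a + ?k - 1) = a + ?k" using cs(2) by simp
    finally have "{u, v} = {cs!b, cs!(Suc b mod ?k)}" using a b by auto
    then show False using b(1) uv(4) unfolding consecutive_iff by blast
  qed
  ultimately show ?thesis using that j(1) by auto
qed

lemma GA_sym: "GA R A x y \<Longrightarrow> GA R A y x"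
  unfolding GA_def by blast

lemma cycle_submatrix_chord:
  assumes cy: "cycle_submatrix A rs cs" and r: "{c \<in> set cs. A r c} = {cs!0, cs!j}"
    and j: "2 \<le> j" "j + 2 \<le> length cs"
  obtains rs1 cs1 rs2 cs2 where
    "cycle_submatrix A rs1 cs1" "length cs1 = Suc j" "set rs1 \<subseteq> insert r (set rs)" "set cs1 \<subseteq> set cs"
    "cycle_submatrix A rs2 cs2" "length cs2 = Suc (length cs - j)"
    "set rs2 \<subseteq> insert r (set rs)" "set cs2 \<subseteq> set cs"
proof -
  let ?k = "length cs"
  let ?rs2 = "rotate j rs" and ?cs2 = "rotate j cs"
  have cy2: "cycle_submatrix A ?rs2 ?cs2" by (rule cycle_submatrix_rotate[OF cy])
  have k: "0 < ?k" "j < ?k" "?k - j < ?k" using j by linarith+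
  then have "?cs2!0 = cs!j" "?cs2!(?k - j) = cs!0" by (simp_all add: nth_rotate)
  then have "{c \<in> set ?cs2. A r c} = {?cs2!0, ?cs2!(?k - j)}" using r by (simp add: insert_commute)
  then have "cycle_submatrix A (take (?k - j) ?rs2 @ [r]) (take (Suc (?k - j)) ?cs2)"
    using j by (intro cycle_submatrix_shortcut[OF cy2]) simp_all
  moreover have "cycle_submatrix A (take j rs @ [r]) (take (Suc j) cs)"
    using j by (intro cycle_submatrix_shortcut[OF cy r]) simp_all
  ultimately show ?thesis
    using that j set_take_subset[of j rs] set_take_subset[of "Suc j" cs]
      set_take_subset[of "?k - j" ?rs2] set_take_subset[of "Suc (?k - j)" ?cs2]
    by (simp add: subset_insertI2)
qed

locale shortest_odd_cycle =
  fixes R :: "'r set" and C :: "'c set" and A :: "'r \<Rightarrow> 'c \<Rightarrow> bool"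
    and rs :: "'r list" and cs :: "'c list"
  assumes linear: "linear_matrix R C A" and no_C3: "\<not> contains_C3 R C A"
    and cycle: "cycle_submatrix A rs cs" and odd_length: "odd (length cs)"
    and rows_in: "set rs \<subseteq> R" and columns_in: "set cs \<subseteq> C"
    and shortest: "\<And>rs' cs'. cycle_submatrix A rs' cs' \<Longrightarrow> odd (length cs') \<Longrightarrow> set rs' \<subseteq> R \<Longrightarrow>
      set cs' \<subseteq> C \<Longrightarrow> length cs \<le> length cs'"
begin

lemma cycle_basics: "length rs = length cs" "3 \<le> length cs" "distinct rs" "distinct cs"
  using cycle unfolding cycle_submatrix_def by auto

lemma row_on_cycle:
  "i < length cs \<Longrightarrow> {c \<in> set cs. A (rs!i) c} = {cs!i, cs!(Suc i mod length cs)}"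
  using cycle unfolding cycle_submatrix_def by auto

lemma Suc_mod_length_less: "Suc i mod length cs < length cs"
  using cycle_basics(2) by (simp add: mod_less_if_3_le)

lemma rim_neighbours_distinct:
  assumes i: "i < length cs"
  shows "cs!i \<noteq> cs!(Suc i mod length cs)"
proof -
  have "i \<noteq> Suc i mod length cs" using i cycle_basics(2) unfolding Suc_mod_eq_if[OF i] by auto
  then show ?thesis using cycle_basics(4) i Suc_mod_length_less by (simp add: nth_eq_iff_index_eq)
qed

lemma rim_row:
  assumes "i < length cs"
  shows "rs!i \<in> R" "A (rs!i) (cs!i)" "A (rs!i) (cs!(Suc i mod length cs))"
proof -
  show "rs!i \<in> R" using rows_in cycle_basics(1) assms by (metis nth_mem subsetD)
  have "cs!i \<in> set cs" "cs!(Suc i mod length cs) \<in> set cs"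
    using assms Suc_mod_length_less by simp_all
  then show "A (rs!i) (cs!i)" "A (rs!i) (cs!(Suc i mod length cs))"
    using row_on_cycle[OF assms] by blast+
qed

lemma rim_adjacent: "i < length cs \<Longrightarrow> GA R A (cs!i) (cs!(Suc i mod length cs))"
  using rim_row rim_neighbours_distinct unfolding GA_def by blast

lemma maximal_clique_is_row:
  assumes K: "maximal_clique (set cs) (GA R A) K"
  obtains r a b where "r \<in> R" "K = {c \<in> set cs. A r c}" "a \<in> K" "b \<in> K" "a \<noteq> b"
proof -
  have KV: "K \<subseteq> set cs" and Kc: "clique (GA R A) K"
    and Km: "\<forall>v\<in>set cs - K. \<not> clique (GA R A) (insert v K)"
    using K unfolding maximal_clique_def by auto
  have "K \<noteq> {}"
  proof
    assume K0: "K = {}"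
    have "cs!0 \<in> set cs" using cycle_basics(2) by (intro nth_mem) linarith
    then show False using Km K0 unfolding clique_def by simp
  qed
  then obtain a where a: "a \<in> K" by blast
  have "\<exists>b\<in>K. b \<noteq> a"
  proof (rule ccontr)
    assume "\<not> (\<exists>b\<in>K. b \<noteq> a)"
    then have Ka: "K = {a}" using a by blast
    obtain i where i: "i < length cs" "a = cs!i" using KV a by (metis in_set_conv_nth subsetD)
    let ?b = "cs!(Suc i mod length cs)"
    have "?b \<in> set cs - K" using Ka i rim_neighbours_distinct[OF i(1)] Suc_mod_length_less by simp
    moreover have "clique (GA R A) (insert ?b K)"
      using Ka i rim_adjacent[OF i(1)] GA_sym[OF rim_adjacent[OF i(1)]] unfolding clique_def by auto
    ultimately show False using Km by blast
  qed
  then obtain b where b: "b \<in> K" "b \<noteq> a" by blast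
  obtain r where r: "r \<in> R" "\<forall>x\<in>K. A r x"
    using clique_in_row[OF linear no_C3 _ Kc a b(1) b(2)[symmetric]] KV columns_in by blast
  have "K = {c \<in> set cs. A r c}" using maximal_clique_eq_row_set[OF K r] by simp
  then show ?thesis using that r(1) a b by blast
qed

lemma maximal_clique_eq_row:
  assumes K: "maximal_clique (set cs) (GA R A) K" and xy: "x \<in> K" "y \<in> K" "x \<noteq> y"
    and r: "r \<in> R" "A r x" "A r y"
  shows "K = {c \<in> set cs. A r c}"
proof -
  obtain r' where r': "r' \<in> R" "K = {c \<in> set cs. A r' c}" using maximal_clique_is_row[OF K] by blast
  have "x \<in> C" "y \<in> C" "A r' x" "A r' y" using r' xy columns_in by auto
  then have "r' = r" using linear_matrix_row_unique[OF linear r'(1) r(1) _ _ xy(3)] r by blast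
  then show ?thesis using r' by simp
qed

lemma inscribed_clique_not_consecutive:
  assumes K: "maximal_clique (set cs) (GA R A) K" "card K \<noteq> 2" and uv: "u \<in> K" "v \<in> K" "u \<noteq> v"
  shows "\<not> consecutive cs u v"
proof
  assume "consecutive cs u v"
  then obtain i where i: "i < length cs" "{u, v} = {cs!i, cs!(Suc i mod length cs)}"
    unfolding consecutive_iff by blast
  have "u \<in> {cs!i, cs!(Suc i mod length cs)}" "v \<in> {cs!i, cs!(Suc i mod length cs)}"
    using i(2) by blast+
  then have "A (rs!i) u" "A (rs!i) v" using rim_row(2,3)[OF i(1)] by blast+
  then have "K = {c \<in> set cs. A (rs!i) c}"
    by (rule maximal_clique_eq_row[OF K(1) uv rim_row(1)[OF i(1)]])
  then have "K = {cs!i, cs!(Suc i mod length cs)}" using row_on_cycle[OF i(1)] by simp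
  then show False using K(2) rim_neighbours_distinct[OF i(1)] by simp
qed

lemma rim_edge_maximal_clique:
  assumes i: "i < length cs"
  shows "maximal_clique (set cs) (GA R A) {cs!i, cs!(Suc i mod length cs)}"
  unfolding maximal_clique_def
proof (intro conjI ballI)
  let ?a = "cs!i" and ?b = "cs!(Suc i mod length cs)"
  show "{?a, ?b} \<subseteq> set cs" using i Suc_mod_length_less by auto
  show "clique (GA R A) {?a, ?b}" using rim_adjacent[OF i] unfolding clique_def GA_def by auto
  fix v assume v: "v \<in> set cs - {?a, ?b}"
  show "\<not> clique (GA R A) (insert v {?a, ?b})"
  proof
    assume "clique (GA R A) (insert v {?a, ?b})"
    then have "GA R A ?a v" "GA R A ?b v" using v unfolding clique_def by auto
    moreover have "?a \<in> C" "?b \<in> C" "v \<in> C" using i Suc_mod_length_less v columns_in by auto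
    ultimately have "A (rs!i) v"
      using row_contains_common_neighbour[OF linear no_C3, of ?a ?b v "rs!i"] rim_row[OF i]
        rim_neighbours_distinct[OF i] v by auto
    then show False using row_on_cycle[OF i] v by auto
  qed
qed

text \<open>A row meeting the cycle in two non-consecutive columns would be a chord, cutting
  the cycle into two shorter ones of which one is odd.\<close>

lemma no_chord_row:
  assumes r: "r \<in> R" "{c \<in> set cs. A r c} = {u, v}" and uv: "u \<noteq> v" "\<not> consecutive cs u v"
  shows False
proof -
  let ?k = "length cs"
  obtain a j where rot: "rotate a cs ! 0 = u" "rotate a cs ! j = v" and j: "2 \<le> j" "j + 2 \<le> ?k"
    using rotate_to_non_consecutive[OF cycle_basics(4,2) _ _ uv] r(2) by blast
  have cy: "cycle_submatrix A (rotate a rs) (rotate a cs)" by (rule cycle_submatrix_rotate[OF cycle])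
  have "{c \<in> set (rotate a cs). A r c} = {rotate a cs ! 0, rotate a cs ! j}" using r(2) rot by simp
  then obtain rs1 cs1 rs2 cs2 where
    c1: "cycle_submatrix A rs1 cs1" "length cs1 = Suc j" "set rs1 \<subseteq> insert r (set rs)"
      "set cs1 \<subseteq> set cs"
    and c2: "cycle_submatrix A rs2 cs2" "length cs2 = Suc (?k - j)" "set rs2 \<subseteq> insert r (set rs)"
      "set cs2 \<subseteq> set cs"
    using cycle_submatrix_chord[OF cy _ j(1)] j(2) unfolding set_rotate length_rotate by blast
  have R: "insert r (set rs) \<subseteq> R" using r(1) rows_in by simp
  have "odd (Suc j) \<or> odd (Suc (?k - j))" using odd_length j by presburger
  then show False
  proof
    assume "odd (Suc j)"
    moreover have "set rs1 \<subseteq> R" "set cs1 \<subseteq> C" using c1(3,4) R columns_in by blast+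
    ultimately have "?k \<le> Suc j" using shortest[OF c1(1)] c1(2) by simp
    then show False using j by simp
  next
    assume "odd (Suc (?k - j))"
    moreover have "set rs2 \<subseteq> R" "set cs2 \<subseteq> C" using c2(3,4) R columns_in by blast+
    ultimately have "?k \<le> Suc (?k - j)" using shortest[OF c2(1)] c2(2) by simp
    then show False using j by simp
  qed
qed

lemma two_element_maximal_cliques_eq_rim:
  "{K. maximal_clique (set cs) (GA R A) K \<and> card K = 2} =
   {{cs ! i, cs ! ((i + 1) mod length cs)} | i. i < length cs}"
proof (rule set_eqI, rule iffI)
  fix K assume "K \<in> {K. maximal_clique (set cs) (GA R A) K \<and> card K = 2}"
  then have K: "maximal_clique (set cs) (GA R A) K" "card K = 2" by auto
  obtain r where r: "r \<in> R" "K = {c \<in> set cs. A r c}" using maximal_clique_is_row[OF K(1)] by blast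
  obtain u v where uv: "K = {u, v}" "u \<noteq> v" using K(2) by (meson card_2_iff)
  then have "consecutive cs u v" using no_chord_row[OF r(1)] r(2) by blast
  then show "K \<in> {{cs ! i, cs ! ((i + 1) mod length cs)} | i. i < length cs}"
    using uv unfolding consecutive_def by auto
next
  fix K assume "K \<in> {{cs ! i, cs ! ((i + 1) mod length cs)} | i. i < length cs}"
  then obtain i where i: "i < length cs" "K = {cs!i, cs!(Suc i mod length cs)}" by auto
  then show "K \<in> {K. maximal_clique (set cs) (GA R A) K \<and> card K = 2}"
    using rim_edge_maximal_clique[OF i(1)] rim_neighbours_distinct[OF i(1)] by simp
qed

lemma mem_inscribed_cliques_not_consecutive:
  assumes "K \<in> inscribed_cliques (set cs) (GA R A)" "u \<in> K" "v \<in> K" "u \<noteq> v"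
  shows "\<not> consecutive cs u v"
  using assms inscribed_clique_not_consecutive unfolding inscribed_cliques_def by blast

context
  fixes S assumes S: "S \<subseteq> inscribed_cliques (set cs) (GA R A)"
begin

lemma rim_edge_not_deleted:
  assumes i: "i < length cs"
  shows "delete_cliques (GA R A) S (cs!i) (cs!(Suc i mod length cs))"
    "delete_cliques (GA R A) S (cs!(Suc i mod length cs)) (cs!i)"
proof -
  have "\<not> (\<exists>K\<in>S. cs!i \<in> K \<and> cs!(Suc i mod length cs) \<in> K)"
    using mem_inscribed_cliques_not_consecutive[OF subsetD[OF S]] rim_neighbours_distinct[OF i] i
    unfolding consecutive_iff by blast
  then show "delete_cliques (GA R A) S (cs!i) (cs!(Suc i mod length cs))"
    "delete_cliques (GA R A) S (cs!(Suc i mod length cs)) (cs!i)"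
    using rim_adjacent[OF i] GA_sym[OF rim_adjacent[OF i]] unfolding delete_cliques_def by blast+
qed

text \<open>Deleting inscribed cliques keeps every row a clique relative to the remaining
  edges: a deleted clique containing two columns of a row is that row.\<close>

lemma deleted_graph_row_closed:
  assumes r: "r \<in> R" and xyw: "x \<in> set cs" "y \<in> set cs" "w \<in> set cs" "A r x" "A r y" "A r w"
    and xy: "delete_cliques (GA R A) S x y" and wx: "w \<noteq> x"
  shows "delete_cliques (GA R A) S x w"
proof -
  have "GA R A x w" using r xyw wx unfolding GA_def by blast
  moreover have "\<not> (\<exists>K\<in>S. x \<in> K \<and> w \<in> K)"
  proof
    assume "\<exists>K\<in>S. x \<in> K \<and> w \<in> K"
    then obtain K where K: "K \<in> S" "x \<in> K" "w \<in> K" by blast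
    have "maximal_clique (set cs) (GA R A) K" using S K(1) unfolding inscribed_cliques_def by blast
    then have "K = {c \<in> set cs. A r c}"
      by (rule maximal_clique_eq_row[OF _ K(2,3) wx[symmetric] r xyw(4,6)])
    then have "y \<in> K" using xyw(2,5) by blast
    then show False using xy K(1,2) unfolding delete_cliques_def by blast
  qed
  ultimately show ?thesis unfolding delete_cliques_def by blast
qed

text \<open>The hole is itself an odd cycle submatrix, so by minimality it uses all columns.\<close>

lemma deleted_graph_odd_hole_spans:
  assumes hs: "set hs \<subseteq> set cs" "induced_cycle (delete_cliques (GA R A) S) hs"
    "odd (length hs)" "5 \<le> length hs"
  shows "set hs = set cs"
proof -
  let ?E' = "delete_cliques (GA R A) S"
  have "\<exists>r\<in>R. A r x \<and> A r y" if "x \<in> set hs" "y \<in> set hs" "?E' x y" for x y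
    using that(3) unfolding delete_cliques_def GA_def by blast
  moreover have "?E' x w" if "r \<in> R" "x \<in> set hs" "y \<in> set hs" "w \<in> set hs"
    "A r x" "A r y" "A r w" "?E' x y" "w \<noteq> x" for r x y w
    using deleted_graph_row_closed that hs(1) by blast
  moreover have "4 \<le> length hs" using hs(4) by simp
  ultimately obtain \<rho> where "cycle_submatrix A (map \<rho> [0..<length hs]) hs" "\<rho> ` {0..<length hs} \<subseteq> R"
    using cycle_submatrix_of_induced_cycle[OF hs(2)] by blast
  then have "length cs \<le> length hs" using shortest hs(1,3) columns_in by fastforce
  moreover have "distinct hs" using hs(2) unfolding induced_cycle_def by simp
  ultimately have "card (set cs) \<le> card (set hs)" using cycle_basics(4) by (simp add: distinct_card)
  then show ?thesis using hs(1) by (simp add: card_seteq)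
qed

end

lemma rim_predecessor:
  assumes i: "i < length cs"
  obtains p where "p < length cs" "Suc p mod length cs = i" "cs!p \<noteq> cs!(Suc i mod length cs)"
proof -
  let ?k = "length cs"
  define p where "p = (i + ?k - 1) mod ?k"
  have p: "p < ?k" "Suc p mod ?k = i"
    unfolding p_def using Suc_pred_mod[OF i] cycle_basics(2) by (simp_all add: mod_less_if_3_le)
  have "Suc i mod ?k \<noteq> p"
  proof
    assume "Suc i mod ?k = p"
    then show False using Suc_Suc_mod_neq[OF cycle_basics(2) i] p(2) by simp
  qed
  then have "cs!p \<noteq> cs!(Suc i mod ?k)"
    using cycle_basics(4) Suc_mod_length_less p(1) by (simp add: nth_eq_iff_index_eq)
  then show ?thesis using that p by blast
qed

lemma surviving_clique_edge_not_deleted: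
  assumes S: "S \<subseteq> inscribed_cliques (set cs) (GA R A)"
    and K0: "maximal_clique (set cs) (GA R A) K0" "K0 \<notin> S" and r0: "r0 \<in> R" "K0 = {c \<in> set cs. A r0 c}"
    and uv: "u \<in> K0" "v \<in> K0" "u \<noteq> v"
  shows "delete_cliques (GA R A) S u v"
proof -
  have A: "A r0 u" "A r0 v" using uv(1,2) r0(2) by blast+
  have "K = K0" if "K \<in> S" "u \<in> K" "v \<in> K" for K
  proof -
    have "maximal_clique (set cs) (GA R A) K" using S that(1) unfolding inscribed_cliques_def by blast
    from maximal_clique_eq_row[OF this that(2,3) uv(3) r0(1) A] show ?thesis using r0(2) by simp
  qed
  then have "\<not> (\<exists>K\<in>S. u \<in> K \<and> v \<in> K)" using K0(2) by blast
  moreover have "GA R A u v" unfolding GA_def using r0(1) uv(3) A by blast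
  ultimately show ?thesis unfolding delete_cliques_def by blast
qed

text \<open>If an inscribed clique \<open>K\<close> survives, a column of \<open>K\<close> keeps its two rim neighbours
  and a third neighbour in \<open>K\<close>, so it cannot lie on a hole through all columns.\<close>

lemma sub_multisun_no_odd_hole:
  assumes S: "S \<subset> inscribed_cliques (set cs) (GA R A)"
  shows "\<not> has_odd_hole (set cs) (delete_cliques (GA R A) S)"
proof
  let ?E' = "delete_cliques (GA R A) S" and ?k = "length cs"
  assume "has_odd_hole (set cs) ?E'"
  then obtain hs where hs: "set hs \<subseteq> set cs" "induced_cycle ?E' hs" "odd (length hs)" "5 \<le> length hs"
    unfolding has_odd_hole_def by blast
  have S': "S \<subseteq> inscribed_cliques (set cs) (GA R A)" using S by blast
  have span: "set hs = set cs" by (rule deleted_graph_odd_hole_spans[OF S' hs])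
  obtain K0 where K0: "K0 \<in> inscribed_cliques (set cs) (GA R A)" "K0 \<notin> S" using S by blast
  then have mc: "maximal_clique (set cs) (GA R A) K0" unfolding inscribed_cliques_def by blast
  then obtain r0 u v where r0: "r0 \<in> R" "K0 = {c \<in> set cs. A r0 c}" "u \<in> K0" "v \<in> K0" "u \<noteq> v"
    by (rule maximal_clique_is_row)
  obtain i where i: "i < ?k" "u = cs!i" using r0(2,3) by (metis (no_types, lifting) in_set_conv_nth mem_Collect_eq)
  obtain p where p: "p < ?k" "Suc p mod ?k = i" and n12: "cs!p \<noteq> cs!(Suc i mod ?k)"
    by (rule rim_predecessor[OF i(1)])
  let ?n1 = "cs!(Suc i mod ?k)" and ?n2 = "cs!p"
  have e1: "?E' u ?n1" using rim_edge_not_deleted(1)[OF S' i(1)] i(2) by simp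
  have e2: "?E' u ?n2" using rim_edge_not_deleted(2)[OF S' p(1)] p(2) i(2) by simp
  have e3: "?E' u v" by (rule surviving_clique_edge_not_deleted[OF S' mc K0(2) r0])
  have nc: "\<not> consecutive cs u v" by (rule mem_inscribed_cliques_not_consecutive[OF K0(1) r0(3-5)])
  have "{u, ?n1} = {cs!i, cs!(Suc i mod ?k)}" "{u, ?n2} = {cs!p, cs!(Suc p mod ?k)}"
    using i(2) p(2) by auto
  then have "consecutive cs u ?n1" "consecutive cs u ?n2"
    using i(1) p(1) unfolding consecutive_iff by blast+
  then have vn: "v \<noteq> ?n1" "v \<noteq> ?n2" using nc by auto
  have "u \<in> set hs" "?n1 \<in> set hs" "?n2 \<in> set hs" "v \<in> set hs"
    using span Suc_mod_length_less p(1) i r0(2,4) by auto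
  then obtain a t1 t2 t3 where idx: "a < length hs" "u = hs!a" "t1 < length hs" "?n1 = hs!t1"
    "t2 < length hs" "?n2 = hs!t2" "t3 < length hs" "v = hs!t3"
    by (metis in_set_conv_nth)
  show False
  proof (rule induced_cycle_no_three_neighbours[OF hs(2) idx(1,3,5,7)])
    show "t1 \<noteq> t2" "t1 \<noteq> t3" "t2 \<noteq> t3" using n12 vn idx(4,6,8) by auto
    show "?E' (hs!a) (hs!t1)" "?E' (hs!a) (hs!t2)" "?E' (hs!a) (hs!t3)"
      using e1 e2 e3 idx(2,4,6,8) by simp_all
  qed
qed

lemma HOH_free_multisun_columns:
  assumes "diamond_free C (GA R A)"
  shows "HOH_free_multisun (set cs) (GA R A)"
  unfolding HOH_free_multisun_def
proof (intro conjI allI impI)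
  show "multisun (set cs) (GA R A)" unfolding multisun_def multisun_rim_def
  proof (intro exI conjI allI impI ballI)
    show "odd (card (set cs))" using odd_length cycle_basics(4) by (simp add: distinct_card)
    show "diamond_free (set cs) (GA R A)"
      using assms columns_in unfolding diamond_free_def by blast
    show "{K. maximal_clique (set cs) (GA R A) K \<and> card K = 2} =
      {{cs ! i, cs ! ((i + 1) mod length cs)} | i. i < length cs}"
      by (rule two_element_maximal_cliques_eq_rim)
  next
    fix K u v assume "maximal_clique (set cs) (GA R A) K \<and> card K \<noteq> 2" "u \<in> K" "v \<in> K" "u \<noteq> v"
    then show "\<not> consecutive cs u v" using inscribed_clique_not_consecutive by blast
  qed (use cycle_basics in auto)
next
  fix S assume "S \<subset> inscribed_cliques (set cs) (GA R A)"
  then show "\<not> has_odd_hole (set cs) (delete_cliques (GA R A) S)" by (rule sub_multisun_no_odd_hole)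
qed

end

lemma shortest_odd_cycle_submatrix_exists:
  assumes "finite R" "finite C" "\<not> balanced R C A"
  obtains rs cs where "cycle_submatrix A rs cs" "odd (length cs)" "set rs \<subseteq> R" "set cs \<subseteq> C"
    "\<And>rs' cs'. cycle_submatrix A rs' cs' \<Longrightarrow> odd (length cs') \<Longrightarrow> set rs' \<subseteq> R \<Longrightarrow> set cs' \<subseteq> C \<Longrightarrow>
      length cs \<le> length cs'"
proof -
  define P where "P n \<longleftrightarrow> (\<exists>rs cs. cycle_submatrix A rs cs \<and> odd (length cs) \<and>
    set rs \<subseteq> R \<and> set cs \<subseteq> C \<and> length cs = n)" for n
  have "\<exists>n. P n" unfolding P_def using not_balanced_imp_odd_cycle_submatrix[OF assms] by blast
  then obtain n where n: "P n" "\<And>m. m < n \<Longrightarrow> \<not> P m" by (metis exists_least_iff)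
  then obtain rs cs where "cycle_submatrix A rs cs" "odd (length cs)" "set rs \<subseteq> R" "set cs \<subseteq> C"
    "length cs = n" unfolding P_def by blast
  moreover have "n \<le> length cs'" if "cycle_submatrix A rs' cs'" "odd (length cs')" "set rs' \<subseteq> R"
    "set cs' \<subseteq> C" for rs' cs'
    using n(2)[of "length cs'"] that unfolding P_def by fastforce
  ultimately show ?thesis using that by blast
qed

lemma balanced_imp_conditions:
  assumes lin: "linear_matrix R C A" and bal: "balanced R C A"
  shows "\<not> contains_C3 R C A \<and> diamond_free C (GA R A) \<and> \<not> has_odd_hole C (GA R A) \<and>
    \<not> (\<exists>S\<subseteq>C. HOH_free_multisun S (GA R A))"
proof (intro conjI)
  show nC3: "\<not> contains_C3 R C A" using contains_C3_not_balanced bal by auto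
  show "diamond_free C (GA R A)" using not_diamond_free_contains_C3[OF lin] nC3 by auto
  show "\<not> has_odd_hole C (GA R A)" using odd_hole_not_balanced bal by auto
  show "\<not> (\<exists>S\<subseteq>C. HOH_free_multisun S (GA R A))"
  proof
    assume "\<exists>S\<subseteq>C. HOH_free_multisun S (GA R A)"
    then obtain S where "S \<subseteq> C" "multisun S (GA R A)" unfolding HOH_free_multisun_def by auto
    from multisun_not_balanced[OF this] show False using bal by contradiction
  qed
qed

lemma conditions_imp_balanced:
  assumes "finite R" "finite C" "linear_matrix R C A" "\<not> contains_C3 R C A"
    "diamond_free C (GA R A)" "\<not> (\<exists>S\<subseteq>C. HOH_free_multisun S (GA R A))"
  shows "balanced R C A"
proof (rule ccontr)
  assume "\<not> balanced R C A"
  then obtain rs cs where "cycle_submatrix A rs cs" "odd (length cs)" "set rs \<subseteq> R" "set cs \<subseteq> C"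
    "\<And>rs' cs'. cycle_submatrix A rs' cs' \<Longrightarrow> odd (length cs') \<Longrightarrow> set rs' \<subseteq> R \<Longrightarrow>
      set cs' \<subseteq> C \<Longrightarrow> length cs \<le> length cs'"
    using shortest_odd_cycle_submatrix_exists[OF assms(1,2)] by blast
  then interpret shortest_odd_cycle R C A rs cs
    using assms(3,4) by unfold_locales auto
  have "HOH_free_multisun (set cs) (GA R A)" by (rule HOH_free_multisun_columns[OF assms(5)])
  then show False using columns_in assms(6) by blast
qed

theorem proposition4:
  fixes R :: "'r set" and C :: "'c set" and A :: "'r \<Rightarrow> 'c \<Rightarrow> bool"
  assumes "finite R" and "finite C" and "linear_matrix R C A"
  shows "balanced R C A \<longleftrightarrow>
           (\<not> contains_C3 R C A \<and>
            diamond_free C (GA R A) \<and>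
            \<not> has_odd_hole C (GA R A) \<and>
            \<not> (\<exists>S\<subseteq>C. HOH_free_multisun S (GA R A)))"
  using balanced_imp_conditions[OF assms(3)] conditions_imp_balanced[OF assms] by blast

end
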